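(* For every index $\mathbf k$ of depth $r$, \[\sum_{i=0}^{r}(-1)^i\,\zeta^{t,*}_{\mathrm{shift}}(\overleftarrow{\mathbf k_{[i]}};T)\,\zeta^{t,\star,*}_{\mathrm{shift}}(\mathbf k^{[i]};T)=\delta_{0,r},\] where $\delta$ is Kronecker's delta.
   Context: $t,T$ are commuting indeterminates. An index is a finite tuple $\mathbf{k}=(k_1,\dots,k_r)$ of positive integers ($r\ge0$), $\mathrm{dep}(\mathbf k)=r$, $\mathrm{wt}(\mathbf k)=\sum k_i$; $\mathbf{k}_{[i]}=(k_1,\dots,k_i)$, $\mathbf{k}^{[i]}=(k_{i+1},\dots,k_r)$, $\overleftarrow{\mathbf{k}}=(k_r,\dots,k_1)$; $\oplus$ is componentwise sum and $b\binom{\mathbf{k}}{\mathbf{l}}=\prod_{i}\binom{k_i+l_i-1}{l_i}$. $\zeta^*(\mathbf k;T)$ is the harmonic regularized polynomial: with $\mathfrak H=\mathbb Q\langle e_0,e_1\rangle$, $e_{\mathbf{k}}=e_1e_0^{k_1-1}\cdots e_1e_0^{k_r-1}$, $Z^*_T$ the unique $\mathbb Q$-algebra homomorphism $(\mathbb Q+e_1\mathfrak H,* )\to\mathbb R[T]$ (harmonic product $*$) with $Z^*_T(e_{\mathbf k})=(-1)^{\mathrm{dep}}\zeta(\mathbf k)$ for admissible $\mathbf k$ (empty or $k_r\ge2$, $\zeta$ the MZV) and $Z^*_T(e_1)=-T$, $\zeta^*(\mathbf k;T)=(-1)^{\mathrm{dep}(\mathbf k)}Z^*_T(e_{\mathbf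 k})$. $\zeta^{t,*}_{\mathrm{shift}}(\mathbf{k};T)=\sum_{\mathbf n\in\mathbb Z_{\ge0}^{\mathrm{dep}(\mathbf k)}}b\binom{\mathbf k}{\mathbf n}\zeta^{*}(\mathbf k\oplus\mathbf n;T)(-t)^{\mathrm{wt}(\mathbf n)}$. $\mathbf l\preceq\mathbf k$ means $\mathbf l$ is obtained from $(k_1\circ\cdots\circ k_r)$ by replacing each $\circ$ by a comma or a plus sign ($\varnothing\preceq\varnothing$), and $\zeta^{t,\star,*}_{\mathrm{shift}}(\mathbf k;T)=\sum_{\mathbf l\preceq\mathbf k}\zeta^{t,*}_{\mathrm{shift}}(\mathbf l;T)$. *)

theory Defs
  imports "HOL-Analysis.Analysis" "HOL-Computational_Algebra.Polynomial"
    "HOL-Computational_Algebra.Formal_Power_Series"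
begin

definition is_index :: "nat list \<Rightarrow> bool" where
  "is_index k \<longleftrightarrow> (\<forall>x\<in>set k. 0 < x)"

definition admissible :: "nat list \<Rightarrow> bool" where
  "admissible k \<longleftrightarrow> is_index k \<and> (k = [] \<or> 2 \<le> last k)"

definition mzv :: "nat list \<Rightarrow> real" where
  "mzv k = (\<Sum>\<^sub>\<infinity>n\<in>{n :: nat list. length n = length k \<and> sorted_wrt (<) n \<and> (\<forall>x\<in>set n. 0 < x)}.
              \<Prod>i<length k. 1 / real (n ! i) ^ (k ! i))"

text \<open>Harmonic (stuffle) product of indices, as the list of resulting indices with multiplicity.\<close>
fun stuffle :: "nat list \<Rightarrow> nat list \<Rightarrow> nat list list" where
  "stuffle [] l = [l]"
| "stuffle k [] = [k]"
| "stuffle (a # k) (b # l) =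
     map ((#) a) (stuffle k (b # l)) @ map ((#) b) (stuffle (a # k) l) @ map ((#) (a + b)) (stuffle k l)"

text \<open>Values on non-indices are fixed to 0 to make it unique.\<close>
definition zeta_star_reg :: "nat list \<Rightarrow> real poly" where
  "zeta_star_reg = (THE f.
     (\<forall>k l. is_index k \<longrightarrow> is_index l \<longrightarrow> f k * f l = sum_list (map f (stuffle k l))) \<and>
     (\<forall>k. admissible k \<longrightarrow> f k = [:mzv k:]) \<and>
     f [1] = [:0, 1:] \<and>
     (\<forall>k. \<not> is_index k \<longrightarrow> f k = 0))"

definition bcoef :: "nat list \<Rightarrow> nat list \<Rightarrow> nat" where
  "bcoef k n = (\<Prod>i<length k. (k ! i + n ! i - 1) choose (n ! i))"

definition vadd :: "nat list \<Rightarrow> nat list \<Rightarrow> nat list" where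
  "vadd k n = map2 (+) k n"

text \<open>zeta^{t,*}_shift(k;T) as a formal power series in t over R[T].\<close>
definition zeta_shift :: "nat list \<Rightarrow> real poly fps" where
  "zeta_shift k = Abs_fps (\<lambda>m. \<Sum>n\<in>{n :: nat list. length n = length k \<and> sum_list n = m}.
       of_nat (bcoef k n) * zeta_star_reg (vadd k n) * (-1) ^ m)"

fun coarsenings :: "nat list \<Rightarrow> nat list list" where
  "coarsenings [] = [[]]"
| "coarsenings [a] = [[a]]"
| "coarsenings (a # b # k) =
     map ((#) a) (coarsenings (b # k)) @ map (\<lambda>l. (a + hd l) # tl l) (coarsenings (b # k))"

definition zeta_star_shift :: "nat list \<Rightarrow> real poly fps" where
  "zeta_star_shift k = sum_list (map zeta_shift (coarsenings k))"

end

theory Submission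
  imports Defs
begin

(* Truncate every nested sum at N and give a summation variable \<nu> carrying the entry a the weight
   (\<nu> + t)^(-a). The truncated shifted sums are then formal power series in t whose coefficients are
   finite nested sums, and for them the identity holds exactly: splitting off the smallest summation
   variable writes the i-th product as G(i - 1) + G(i), so the alternating sum telescopes.

   The regularised polynomial zeta^*(k;T) is the unique polynomial P with
   P(harm N) - zeta_N(k) = o(harm N ^ -j) for every j. Such a P exists for admissible k by convergence
   of the truncations, and for k0 @ [1] because the harmonic product of k0 and [1] is a positive
   multiple of k0 @ [1] plus indices with fewer trailing ones. This characterisation respects sums
   and products, so the truncated identity passes to the regularised one coefficientwise. *)

section \<open>Truncated nested sums\<close>

fun zeta_trunc :: "(nat \<Rightarrow> nat \<Rightarrow> 'a::comm_ring_1) \<Rightarrow> nat \<Rightarrow> nat \<Rightarrow> nat list \<Rightarrow> 'a" where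
  "zeta_trunc S N lo [] = 1"
| "zeta_trunc S N lo (a # k) = (\<Sum>\<nu>\<in>{lo..N}. S a \<nu> * zeta_trunc S N (Suc \<nu>) k)"

fun zeta_star_trunc :: "(nat \<Rightarrow> nat \<Rightarrow> 'a::comm_ring_1) \<Rightarrow> nat \<Rightarrow> nat \<Rightarrow> nat list \<Rightarrow> 'a" where
  "zeta_star_trunc S N lo [] = 1"
| "zeta_star_trunc S N lo (a # k) = (\<Sum>\<nu>\<in>{lo..N}. S a \<nu> * zeta_star_trunc S N \<nu> k)"

lemma zeta_trunc_Cons_lower:
  "lo \<le> N \<Longrightarrow>
    zeta_trunc S N lo (c # l) = S c lo * zeta_trunc S N (Suc lo) l + zeta_trunc S N (Suc lo) (c # l)"
  by (simp add: sum.atLeast_Suc_atMost)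

lemma zeta_star_trunc_Cons_lower:
  "lo \<le> N \<Longrightarrow>
    zeta_star_trunc S N lo (c # l) = S c lo * zeta_star_trunc S N lo l + zeta_star_trunc S N (Suc lo) (c # l)"
  by (simp add: sum.atLeast_Suc_atMost)

lemma sum_list_map_sum:
  "sum_list (map (\<lambda>x. sum (f x) A) xs) = (\<Sum>a\<in>A. sum_list (map (\<lambda>x. f x a) xs))"
  by (induction xs) (auto simp: sum.distrib)

lemma coarsenings_Cons_nonempty: "l \<in> set (coarsenings (b # k)) \<Longrightarrow> l \<noteq> []"
  by (induction "b # k" arbitrary: b k rule: coarsenings.induct) auto

lemma sum_coarsenings_zeta_trunc:
  assumes mult: "\<And>a b \<nu>. S (a + b) \<nu> = S a \<nu> * S b \<nu>"
  shows "sum_list (map (zeta_trunc S N lo) (coarsenings k)) = zeta_star_trunc S N lo k"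
proof (induction k arbitrary: lo rule: coarsenings.induct)
  case (3 a b k)
  let ?C = "coarsenings (b # k)"
  have merge: "zeta_trunc S N lo (a # l) + zeta_trunc S N lo ((a + hd l) # tl l) =
      (\<Sum>\<nu>\<in>{lo..N}. S a \<nu> * zeta_trunc S N \<nu> l)" if "l \<in> set ?C" for l
  proof -
    from coarsenings_Cons_nonempty[OF that] obtain c l' where l: "l = c # l'"
      by (cases l) auto
    have "zeta_trunc S N lo (a # l) + zeta_trunc S N lo ((a + hd l) # tl l) =
        (\<Sum>\<nu>\<in>{lo..N}. S a \<nu> * (zeta_trunc S N (Suc \<nu>) l + S c \<nu> * zeta_trunc S N (Suc \<nu>) l'))"
      by (simp add: l mult sum.distrib algebra_simps)
    also have "\<dots> = (\<Sum>\<nu>\<in>{lo..N}. S a \<nu> * zeta_trunc S N \<nu> l)"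
      by (intro sum.cong refl) (auto simp: l sum.atLeast_Suc_atMost algebra_simps)
    finally show ?thesis .
  qed
  have "sum_list (map (zeta_trunc S N lo) (coarsenings (a # b # k))) =
      sum_list (map (\<lambda>l. zeta_trunc S N lo (a # l) + zeta_trunc S N lo ((a + hd l) # tl l)) ?C)"
    by (simp add: o_def sum_list_addf)
  also have "\<dots> = sum_list (map (\<lambda>l. \<Sum>\<nu>\<in>{lo..N}. S a \<nu> * zeta_trunc S N \<nu> l) ?C)"
    by (intro arg_cong[where f = sum_list] map_cong refl merge)
  also have "\<dots> = (\<Sum>\<nu>\<in>{lo..N}. S a \<nu> * sum_list (map (zeta_trunc S N \<nu>) ?C))"
    by (simp add: sum_list_map_sum sum_list_const_mult)
  also have "\<dots> = zeta_star_trunc S N lo (a # b # k)"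
    using 3 by simp
  finally show ?case .
qed simp_all

lemma zeta_trunc_mult_zeta_star_trunc:
  "zeta_trunc S N lo (a # x) * zeta_star_trunc S N lo (b # y) =
     (\<Sum>\<nu>\<in>{lo..N}. S a \<nu> * zeta_trunc S N (Suc \<nu>) x * zeta_star_trunc S N \<nu> (b # y)) +
     (\<Sum>\<nu>\<in>{lo..N}. S b \<nu> * zeta_trunc S N (Suc \<nu>) (a # x) * zeta_star_trunc S N \<nu> y)"
proof (induction "Suc N - lo" arbitrary: lo)
  case (Suc d)
  then have "lo \<le> N" by simp
  with Suc(1)[of "Suc lo"] Suc(2) show ?case
    by (simp add: zeta_trunc_Cons_lower zeta_star_trunc_Cons_lower sum.atLeast_Suc_atMost algebra_simps)
qed simp

lemma alternating_sum_telescope: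
  fixes T G :: "nat \<Rightarrow> 'a::comm_ring_1"
  assumes "0 < r" "T 0 = G 0" "T r = G (r - 1)" "\<And>i. 0 < i \<Longrightarrow> i < r \<Longrightarrow> T i = G (i - 1) + G i"
  shows "(\<Sum>i=0..r. (-1) ^ i * T i) = 0"
proof -
  have partial: "(\<Sum>i=0..j. (-1) ^ i * T i) = (-1) ^ j * G j" if "j < r" for j
    using that
  proof (induction j)
    case (Suc j)
    then show ?case using assms(4)[of "Suc j"] by (simp add: algebra_simps)
  qed (simp add: assms(2))
  obtain r' where r: "r = Suc r'" using assms(1) by (cases r) auto
  show ?thesis using partial[of r'] assms(3) by (simp add: r algebra_simps)
qed

lemma antipode_zeta_trunc:
  assumes "k \<noteq> []"
  shows "(\<Sum>i=0..length k. (-1) ^ i *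
    (zeta_trunc S N lo (rev (take i k)) * zeta_star_trunc S N lo (drop i k))) = 0"
proof (rule alternating_sum_telescope)
  define G where "G i = (\<Sum>\<nu>\<in>{lo..N}. S (k!i) \<nu> * zeta_trunc S N (Suc \<nu>) (rev (take i k)) *
      zeta_star_trunc S N \<nu> (drop (Suc i) k))" for i
  have rev_take: "rev (take i k) = k ! (i - 1) # rev (take (i - 1) k)" if "0 < i" "i \<le> length k" for i
    using that take_Suc_conv_app_nth[of "i - 1" k] by simp
  show "0 < length k" using assms by simp
  show "zeta_trunc S N lo (rev (take 0 k)) * zeta_star_trunc S N lo (drop 0 k) = G 0"
    using assms by (cases k) (auto simp: G_def)
  show "zeta_trunc S N lo (rev (take (length k) k)) * zeta_star_trunc S N lo (drop (length k) k) =
      G (length k - 1)"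
    unfolding G_def rev_take[OF _ order_refl, unfolded length_greater_0_conv, OF assms] by simp
  show "zeta_trunc S N lo (rev (take i k)) * zeta_star_trunc S N lo (drop i k) = G (i - 1) + G i"
    if "0 < i" "i < length k" for i
  proof -
    have "drop (Suc (i - 1)) k = drop i k" "drop i k = k ! i # drop (Suc i) k"
      using that by (simp_all add: Cons_nth_drop_Suc)
    then show ?thesis
      unfolding G_def rev_take[OF that(1) less_imp_le[OF that(2)]]
      by (simp only: zeta_trunc_mult_zeta_star_trunc)
  qed
qed

lemma sum_mult_sum_split_diagonal:
  fixes A B :: "nat \<Rightarrow> 'a::comm_ring_1"
  shows "(\<Sum>\<nu>\<in>{lo..N}. A \<nu>) * (\<Sum>\<mu>\<in>{lo..N}. B \<mu>) =
    (\<Sum>\<nu>\<in>{lo..N}. A \<nu> * (\<Sum>\<mu>\<in>{Suc \<nu>..N}. B \<mu>)) +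
    (\<Sum>\<mu>\<in>{lo..N}. B \<mu> * (\<Sum>\<nu>\<in>{Suc \<mu>..N}. A \<nu>)) +
    (\<Sum>\<nu>\<in>{lo..N}. A \<nu> * B \<nu>)"
proof (induction "Suc N - lo" arbitrary: lo)
  case (Suc d)
  then have "lo \<le> N" by simp
  with Suc(1)[of "Suc lo"] Suc(2) show ?case
    by (simp add: sum.atLeast_Suc_atMost algebra_simps)
qed simp

lemma zeta_trunc_stuffle:
  assumes mult: "\<And>a b \<nu>. S (a + b) \<nu> = S a \<nu> * S b \<nu>"
  shows "zeta_trunc S N lo k * zeta_trunc S N lo l = sum_list (map (zeta_trunc S N lo) (stuffle k l))"
proof (induction k l arbitrary: lo rule: stuffle.induct)
  case (3 a k b l)
  have Cons: "(\<Sum>\<nu>\<in>{lo..N}. S c \<nu> * zeta_trunc S N (Suc \<nu>) x * zeta_trunc S N (Suc \<nu>) y) =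
      sum_list (map (zeta_trunc S N lo) (map ((#) c) (stuffle x y)))"
    if "\<And>lo. zeta_trunc S N lo x * zeta_trunc S N lo y = sum_list (map (zeta_trunc S N lo) (stuffle x y))"
    for c x y
    by (simp add: that mult.assoc o_def sum_list_map_sum sum_list_const_mult)
  let ?A = "\<lambda>\<nu>. S a \<nu> * zeta_trunc S N (Suc \<nu>) k" and ?B = "\<lambda>\<nu>. S b \<nu> * zeta_trunc S N (Suc \<nu>) l"
  have "zeta_trunc S N lo (a # k) * zeta_trunc S N lo (b # l) =
      (\<Sum>\<nu>\<in>{lo..N}. ?A \<nu> * (\<Sum>\<mu>\<in>{Suc \<nu>..N}. ?B \<mu>)) +
      (\<Sum>\<mu>\<in>{lo..N}. ?B \<mu> * (\<Sum>\<nu>\<in>{Suc \<mu>..N}. ?A \<nu>)) +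
      (\<Sum>\<nu>\<in>{lo..N}. ?A \<nu> * ?B \<nu>)"
    by (simp only: zeta_trunc.simps sum_mult_sum_split_diagonal)
  also have "\<dots> =
      (\<Sum>\<nu>\<in>{lo..N}. S a \<nu> * zeta_trunc S N (Suc \<nu>) k * zeta_trunc S N (Suc \<nu>) (b # l)) +
      (\<Sum>\<nu>\<in>{lo..N}. S b \<nu> * zeta_trunc S N (Suc \<nu>) (a # k) * zeta_trunc S N (Suc \<nu>) l) +
      (\<Sum>\<nu>\<in>{lo..N}. S (a + b) \<nu> * zeta_trunc S N (Suc \<nu>) k * zeta_trunc S N (Suc \<nu>) l)"
    by (simp add: mult algebra_simps)
  also have "\<dots> = sum_list (map (zeta_trunc S N lo) (stuffle (a # k) (b # l)))"
    using "3.IH" by (simp only: Cons stuffle.simps map_append sum_list_append add.assoc)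
  finally show ?case .
qed simp_all

section \<open>Approximation by polynomials in harmonic numbers\<close>

definition harm_negligible :: "(nat \<Rightarrow> real) \<Rightarrow> bool" where
  "harm_negligible e \<longleftrightarrow> (\<forall>j. (\<lambda>N. e N * harm N ^ j) \<longlonglongrightarrow> 0)"

text \<open>The indeterminate \<open>T\<close> of the regularisation is modelled by the harmonic number \<open>harm N\<close>,
  the truncation of \<open>\<zeta>(1)\<close>: a polynomial approximates a sequence if the error decays faster than
  every power of \<open>1 / harm N\<close>.\<close>
definition harm_approx :: "real poly \<Rightarrow> (nat \<Rightarrow> real) \<Rightarrow> bool" where
  "harm_approx p x \<longleftrightarrow> harm_negligible (\<lambda>N. poly p (harm N) - x N)"

lemma harm_negligible_zero: "harm_negligible (\<lambda>N. 0)"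
  by (simp add: harm_negligible_def)

lemma harm_negligible_imp_tendsto_zero: "harm_negligible e \<Longrightarrow> e \<longlonglongrightarrow> 0"
  unfolding harm_negligible_def by (auto dest: spec[of _ 0])

lemma harm_negligible_add: "harm_negligible e \<Longrightarrow> harm_negligible f \<Longrightarrow> harm_negligible (\<lambda>N. e N + f N)"
  unfolding harm_negligible_def by (auto simp: distrib_right intro!: tendsto_add_zero)

lemma harm_negligible_cmult: "harm_negligible e \<Longrightarrow> harm_negligible (\<lambda>N. c * e N)"
  unfolding harm_negligible_def using tendsto_mult_right_zero by (fastforce simp: mult.assoc)

lemma harm_negligible_diff: "harm_negligible e \<Longrightarrow> harm_negligible f \<Longrightarrow> harm_negligible (\<lambda>N. e N - f N)"
  using harm_negligible_add[of e "\<lambda>N. -1 * f N"] harm_negligible_cmult[of f "-1"] by simp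

lemma harm_negligible_mult: "harm_negligible e \<Longrightarrow> harm_negligible f \<Longrightarrow> harm_negligible (\<lambda>N. e N * f N)"
  unfolding harm_negligible_def
proof safe
  fix j assume e: "\<forall>j. (\<lambda>N. e N * harm N ^ j) \<longlonglongrightarrow> 0" and f: "\<forall>j. (\<lambda>N. f N * harm N ^ j) \<longlonglongrightarrow> 0"
  have "(\<lambda>N. (e N * harm N ^ j) * f N) \<longlonglongrightarrow> 0 * 0"
    using e f by (intro tendsto_mult) (auto dest: spec[of _ 0])
  then show "(\<lambda>N. e N * f N * harm N ^ j) \<longlonglongrightarrow> 0" by (simp add: algebra_simps)
qed

lemma harm_negligible_mult_poly_harm: "harm_negligible e \<Longrightarrow> harm_negligible (\<lambda>N. e N * poly p (harm N))"
proof (induction p)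
  case (pCons a p)
  have "harm_negligible (\<lambda>N. e N * poly p (harm N) * harm N)"
    using pCons.IH[OF pCons.prems] unfolding harm_negligible_def
    by (auto simp: mult.assoc simp flip: power_Suc)
  then have "harm_negligible (\<lambda>N. a * e N + e N * poly p (harm N) * harm N)"
    using pCons.prems by (intro harm_negligible_add harm_negligible_cmult)
  then show ?case by (simp add: algebra_simps)
qed (simp add: harm_negligible_zero)

lemma poly_harm_tendsto_zero_imp_zero:
  assumes "(\<lambda>N. poly p (harm N :: real)) \<longlonglongrightarrow> 0"
  shows "p = 0"
proof (rule ccontr)
  assume p: "p \<noteq> 0"
  show False
  proof (cases "degree p = 0")
    case True
    then obtain c where "p = [:c:]" "c \<noteq> 0"
      using p by (metis degree_eq_zeroE pCons_0_0)
    with assms show False by (simp add: LIMSEQ_const_iff)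
  next
    case False
    have "filterlim (poly p) at_infinity at_infinity"
      using False by (intro filterlim_poly_at_infinity) auto
    moreover have "filterlim (harm :: nat \<Rightarrow> real) at_infinity sequentially"
      using harm_at_top filterlim_at_top_imp_at_infinity by blast
    ultimately have "filterlim (\<lambda>N. poly p (harm N :: real)) at_infinity sequentially"
      by (rule filterlim_compose)
    with assms show False
      using not_tendsto_and_filterlim_at_infinity[of sequentially] by auto
  qed
qed

lemma harm_approx_unique: "harm_approx p x \<Longrightarrow> harm_approx q x \<Longrightarrow> p = q"
proof -
  assume "harm_approx p x" "harm_approx q x"
  then have "harm_negligible (\<lambda>N. (poly p (harm N) - x N) - (poly q (harm N) - x N))"
    unfolding harm_approx_def by (rule harm_negligible_diff)
  then have "(\<lambda>N. poly (p - q) (harm N)) \<longlonglongrightarrow> 0"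
    by (auto dest!: harm_negligible_imp_tendsto_zero simp: algebra_simps)
  then show "p = q" using poly_harm_tendsto_zero_imp_zero by fastforce
qed

lemma harm_approx_const: "(\<And>x. poly p x = c) \<Longrightarrow> harm_approx p (\<lambda>N. c)"
  by (simp add: harm_approx_def harm_negligible_zero)

lemma harm_approx_harm: "harm_approx [:0, 1:] harm"
  by (simp add: harm_approx_def harm_negligible_zero)

lemma harm_approx_add:
  "harm_approx p x \<Longrightarrow> harm_approx q y \<Longrightarrow> harm_approx (p + q) (\<lambda>N. x N + y N)"
  unfolding harm_approx_def by (drule (1) harm_negligible_add) (simp add: algebra_simps)

lemma harm_approx_diff:
  "harm_approx p x \<Longrightarrow> harm_approx q y \<Longrightarrow> harm_approx (p - q) (\<lambda>N. x N - y N)"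
  unfolding harm_approx_def by (drule (1) harm_negligible_diff) (simp add: algebra_simps)

lemma harm_approx_smult: "harm_approx p x \<Longrightarrow> harm_approx (smult c p) (\<lambda>N. c * x N)"
  unfolding harm_approx_def by (drule harm_negligible_cmult[where c = c]) (simp add: algebra_simps)

lemma harm_approx_mult:
  assumes "harm_approx p x" "harm_approx q y"
  shows "harm_approx (p * q) (\<lambda>N. x N * y N)"
proof -
  define e where "e = (\<lambda>N. poly p (harm N) - x N)"
  define f where "f = (\<lambda>N. poly q (harm N) - y N)"
  have "harm_negligible e" "harm_negligible f"
    using assms by (simp_all add: harm_approx_def e_def f_def)
  then have "harm_negligible (\<lambda>N. e N * poly q (harm N) + f N * poly p (harm N) - e N * f N)"
    by (intro harm_negligible_diff harm_negligible_add harm_negligible_mult_poly_harm harm_negligible_mult)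
  moreover have "poly (p * q) (harm N) - x N * y N =
      e N * poly q (harm N) + f N * poly p (harm N) - e N * f N" for N
    by (simp add: e_def f_def algebra_simps)
  ultimately show ?thesis unfolding harm_approx_def by simp
qed

lemma harm_approx_sum:
  "finite A \<Longrightarrow> (\<And>a. a \<in> A \<Longrightarrow> harm_approx (p a) (x a)) \<Longrightarrow>
    harm_approx (\<Sum>a\<in>A. p a) (\<lambda>N. \<Sum>a\<in>A. x a N)"
  by (induction A rule: finite_induct) (use harm_approx_const[of 0 0] in \<open>auto intro: harm_approx_add\<close>)

lemma harm_approx_sum_list:
  "(\<And>a. a \<in> set xs \<Longrightarrow> harm_approx (p a) (x a)) \<Longrightarrow>
    harm_approx (sum_list (map p xs)) (\<lambda>N. sum_list (map (\<lambda>a. x a N) xs))"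
  by (induction xs) (use harm_approx_const[of 0 0] in \<open>auto intro: harm_approx_add\<close>)

section \<open>Truncated multiple zeta values\<close>

lemma zeta_trunc_snoc:
  "lo \<le> Suc M \<Longrightarrow>
    zeta_trunc S (Suc M) lo (k @ [a]) = zeta_trunc S M lo (k @ [a]) + S a (Suc M) * zeta_trunc S M lo k"
proof (induction k arbitrary: lo)
  case (Cons c k)
  have empty: "zeta_trunc S (Suc M) (Suc (Suc M)) (k @ [a]) = 0"
    by (cases "k @ [a]") auto
  have "zeta_trunc S (Suc M) lo ((c # k) @ [a]) =
      (\<Sum>\<nu>\<in>{lo..M}. S c \<nu> * zeta_trunc S (Suc M) (Suc \<nu>) (k @ [a]))"
    using Cons.prems empty by (simp add: sum.cl_ivl_Suc)
  also have "\<dots> = (\<Sum>\<nu>\<in>{lo..M}. S c \<nu> *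
      (zeta_trunc S M (Suc \<nu>) (k @ [a]) + S a (Suc M) * zeta_trunc S M (Suc \<nu>) k))"
    by (intro sum.cong refl) (simp add: Cons.IH)
  also have "\<dots> = zeta_trunc S M lo ((c # k) @ [a]) + S a (Suc M) * zeta_trunc S M lo (c # k)"
    by (simp add: sum.distrib sum_distrib_left algebra_simps)
  finally show ?case .
qed simp

definition strict_chains :: "nat \<Rightarrow> nat \<Rightarrow> nat \<Rightarrow> nat list set" where
  "strict_chains lo N r = {n. length n = r \<and> sorted_wrt (<) n \<and> (\<forall>x\<in>set n. lo \<le> x \<and> x \<le> N)}"

lemma finite_strict_chains: "finite (strict_chains lo N r)"
proof -
  have "strict_chains lo N r \<subseteq> {n. set n \<subseteq> {lo..N} \<and> length n = r}"
    by (auto simp: strict_chains_def)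
  then show ?thesis using finite_lists_length_eq[of "{lo..N}" r] finite_subset by blast
qed

lemma strict_chains_Suc:
  "strict_chains lo N (Suc r) = (\<Union>\<nu>\<in>{lo..N}. (#) \<nu> ` strict_chains (Suc \<nu>) N r)"
  unfolding strict_chains_def
  by (auto simp: length_Suc_conv Suc_le_eq) (meson le_less_trans less_imp_le)

definition chain_term :: "(nat \<Rightarrow> nat \<Rightarrow> 'a::comm_ring_1) \<Rightarrow> nat list \<Rightarrow> nat list \<Rightarrow> 'a" where
  "chain_term S k n = (\<Prod>i<length k. S (k ! i) (n ! i))"

lemma zeta_trunc_eq_sum_chains:
  "zeta_trunc S N lo k = (\<Sum>n\<in>strict_chains lo N (length k). chain_term S k n)"
proof (induction k arbitrary: lo)
  case Nil
  have "strict_chains lo N 0 = {[]}" by (auto simp: strict_chains_def)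
  then show ?case by (simp add: chain_term_def)
next
  case (Cons a k)
  have "(\<Sum>n\<in>strict_chains lo N (length (a # k)). chain_term S (a # k) n) =
      (\<Sum>\<nu>\<in>{lo..N}. \<Sum>n\<in>(#) \<nu> ` strict_chains (Suc \<nu>) N (length k). chain_term S (a # k) n)"
    unfolding length_Cons strict_chains_Suc
    by (rule sum.UNION_disjoint) (auto simp: finite_strict_chains)
  also have "\<dots> = (\<Sum>\<nu>\<in>{lo..N}. S a \<nu> * (\<Sum>n\<in>strict_chains (Suc \<nu>) N (length k). chain_term S k n))"
    by (intro sum.cong refl)
      (simp add: sum.reindex chain_term_def prod.lessThan_Suc_shift sum_distrib_left del: prod.lessThan_Suc)
  finally show ?case by (simp add: Cons.IH)
qed

definition power_weight :: "nat \<Rightarrow> nat \<Rightarrow> real" where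
  "power_weight a \<nu> = 1 / real \<nu> ^ a"

definition mzv_trunc :: "nat list \<Rightarrow> nat \<Rightarrow> real" where
  "mzv_trunc k N = zeta_trunc power_weight N 1 k"

lemma power_weight_add: "power_weight (a + b) \<nu> = power_weight a \<nu> * power_weight b \<nu>"
  by (simp add: power_weight_def power_add)

lemma power_weight_le: "1 \<le> \<nu> \<Longrightarrow> b \<le> a \<Longrightarrow> power_weight a \<nu> \<le> 1 / real \<nu> ^ b"
  unfolding power_weight_def by (intro divide_left_mono power_increasing) auto

lemma zeta_trunc_power_weight_nonneg: "0 \<le> zeta_trunc power_weight N lo k"
  by (induction k arbitrary: lo) (auto intro!: sum_nonneg mult_nonneg_nonneg simp: power_weight_def)

lemma zeta_trunc_power_weight_le:
  "is_index k \<Longrightarrow> 1 \<le> lo \<Longrightarrow> zeta_trunc power_weight N lo k \<le> harm N ^ length k"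
proof (induction k arbitrary: lo)
  case (Cons a k)
  then have "1 \<le> a" "is_index k" by (auto simp: is_index_def)
  have "zeta_trunc power_weight N lo (a # k) \<le> (\<Sum>\<nu>\<in>{lo..N}. 1 / real \<nu> * harm N ^ length k)"
    unfolding zeta_trunc.simps
  proof (rule sum_mono, rule mult_mono)
    fix \<nu> assume "\<nu> \<in> {lo..N}"
    with Cons.prems \<open>1 \<le> a\<close> show "power_weight a \<nu> \<le> 1 / real \<nu>"
      using power_weight_le[of \<nu> 1 a] by simp
    show "zeta_trunc power_weight N (Suc \<nu>) k \<le> harm N ^ length k"
      using Cons.IH[OF \<open>is_index k\<close>] by simp
  qed (auto simp: zeta_trunc_power_weight_nonneg harm_nonneg)
  also have "\<dots> \<le> harm N * harm N ^ length k"
    unfolding sum_distrib_right[symmetric]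
  proof (rule mult_right_mono)
    show "(\<Sum>\<nu>\<in>{lo..N}. 1 / real \<nu>) \<le> harm N"
      unfolding harm_def inverse_eq_divide using Cons.prems by (intro sum_mono2) auto
  qed (simp add: harm_nonneg)
  finally show ?case by simp
qed simp

lemma summable_harm_power_div_square: "summable (\<lambda>\<nu>. harm \<nu> ^ d / real \<nu> ^ 2 :: real)"
proof -
  \<comment> \<open>\<open>harm \<nu> \<le> 1 + ln \<nu> = O(\<nu> powr a)\<close> with \<open>a * d \<le> 1/2\<close>, so the terms are \<open>O(\<nu> powr (-3/2))\<close>.\<close>
  define a :: real where "a = 1 / (2 * (real d + 1))"
  have a: "0 < a" "a * real d \<le> 1 / 2" by (simp_all add: a_def field_simps)
  define C where "C = (1 + 1 / a) ^ d"
  have bound: "norm (harm \<nu> ^ d / real \<nu> ^ 2) \<le> C * real \<nu> powr (- 3 / 2)" if "1 \<le> \<nu>" for \<nu>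
  proof -
    have \<nu>: "1 \<le> real \<nu>" using that by simp
    have "harm \<nu> \<le> 1 + ln (real \<nu>)"
      using euler_mascheroni_sequence_decreasing[of 1 \<nu>] that by (simp add: harm_def)
    also have "\<dots> \<le> real \<nu> powr a + real \<nu> powr a / a"
      using ln_powr_bound[OF \<nu> a(1)] ge_one_powr_ge_zero[OF \<nu>, of a] a by linarith
    finally have "harm \<nu> \<le> (1 + 1 / a) * real \<nu> powr a" by (simp add: field_simps)
    then have "harm \<nu> ^ d \<le> ((1 + 1 / a) * real \<nu> powr a) ^ d"
      by (intro power_mono) (auto simp: harm_nonneg)
    also have "\<dots> = C * real \<nu> powr (real d * a)"
      using that by (simp add: C_def power_mult_distrib powr_power)
    also have "\<dots> \<le> C * real \<nu> powr (1 / 2)"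
      using a \<nu> by (intro mult_left_mono powr_mono) (auto simp: C_def mult.commute)
    finally have "harm \<nu> ^ d / real \<nu> ^ 2 \<le> C * real \<nu> powr (1 / 2) / real \<nu> powr 2"
      using that by (simp add: powr_realpow divide_right_mono)
    also have "\<dots> = C * real \<nu> powr (- 3 / 2)"
      using powr_diff[of "real \<nu>" "1/2" 2] by simp
    finally show ?thesis by (simp add: harm_nonneg)
  qed
  have "summable (\<lambda>\<nu>. C * real \<nu> powr (- 3 / 2))"
    by (intro summable_mult) (simp add: summable_real_powr_iff)
  then show ?thesis using bound by (rule summable_comparison_test'[where N = 1])
qed

definition harm_tail :: "nat \<Rightarrow> nat \<Rightarrow> real" where
  "harm_tail d N = (\<Sum>i. harm (i + Suc N) ^ d / real (i + Suc N) ^ 2)"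

lemma harm_tail_tendsto_zero: "harm_tail d \<longlonglongrightarrow> 0"
proof -
  let ?f = "\<lambda>\<nu>. harm \<nu> ^ d / real \<nu> ^ 2 :: real"
  have s: "summable ?f" by (rule summable_harm_power_div_square)
  have "(\<lambda>N. suminf ?f - (\<Sum>i<Suc N. ?f i)) \<longlonglongrightarrow> suminf ?f - suminf ?f"
    by (intro tendsto_diff tendsto_const LIMSEQ_Suc summable_LIMSEQ[OF s])
  moreover have tail: "harm_tail d N = suminf ?f - (\<Sum>i<Suc N. ?f i)" for N
    using suminf_split_initial_segment[OF s, of "Suc N"] unfolding harm_tail_def by linarith
  ultimately show ?thesis by (simp add: tail[abs_def])
qed

lemma harm_tail_mult_harm_power_le: "harm_tail d N * harm N ^ j \<le> harm_tail (d + j) N"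
proof -
  have s: "summable (\<lambda>i. harm (i + Suc N) ^ e / real (i + Suc N) ^ 2 :: real)" for e
    using summable_harm_power_div_square by (rule summable_ignore_initial_segment)
  have "harm_tail d N * harm N ^ j = (\<Sum>i. harm (i + Suc N) ^ d / real (i + Suc N) ^ 2 * harm N ^ j)"
    unfolding harm_tail_def by (rule suminf_mult2[OF s])
  also have "\<dots> \<le> harm_tail (d + j) N"
    unfolding harm_tail_def
  proof (intro suminf_le allI summable_mult2 s)
    fix i
    have "harm N ^ j \<le> (harm (i + Suc N) :: real) ^ j"
      by (intro power_mono harm_mono harm_nonneg) simp
    then show "harm (i + Suc N) ^ d / real (i + Suc N) ^ 2 * harm N ^ j \<le>
        harm (i + Suc N) ^ (d + j) / real (i + Suc N) ^ 2"
      by (auto simp: power_add divide_simps harm_nonneg intro!: mult_left_mono)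
  qed
  finally show ?thesis .
qed

lemma sum_le_harm_tail: "(\<Sum>\<nu>\<in>{Suc N..M}. harm \<nu> ^ d / real \<nu> ^ 2) \<le> harm_tail d N"
proof -
  have "(\<Sum>\<nu>\<in>{Suc N..M}. harm \<nu> ^ d / real \<nu> ^ 2) =
      (\<Sum>i<Suc M - Suc N. harm (i + Suc N) ^ d / real (i + Suc N) ^ 2 :: real)"
    by (rule sum.reindex_bij_witness[where j = "\<lambda>\<nu>. \<nu> - Suc N" and i = "\<lambda>i. i + Suc N"]) auto
  also have "\<dots> \<le> harm_tail d N"
    unfolding harm_tail_def
    by (intro sum_le_suminf summable_ignore_initial_segment summable_harm_power_div_square)
      (auto simp: harm_nonneg)
  finally show ?thesis .
qed

lemma mzv_trunc_Suc_bounds: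
  assumes "admissible (k @ [a])"
  shows "mzv_trunc (k @ [a]) M \<le> mzv_trunc (k @ [a]) (Suc M)"
    and "mzv_trunc (k @ [a]) (Suc M) \<le>
      mzv_trunc (k @ [a]) M + harm (Suc M) ^ length k / real (Suc M) ^ 2"
proof -
  have "2 \<le> a" "is_index k"
    using assms by (auto simp: admissible_def is_index_def)
  have incr: "mzv_trunc (k @ [a]) (Suc M) =
      mzv_trunc (k @ [a]) M + power_weight a (Suc M) * mzv_trunc k M"
    unfolding mzv_trunc_def by (rule zeta_trunc_snoc) simp
  have "0 \<le> power_weight a (Suc M) * mzv_trunc k M"
    by (simp add: power_weight_def mzv_trunc_def zeta_trunc_power_weight_nonneg)
  then show "mzv_trunc (k @ [a]) M \<le> mzv_trunc (k @ [a]) (Suc M)"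
    using incr by simp
  have "mzv_trunc k M \<le> harm M ^ length k"
    using zeta_trunc_power_weight_le[OF \<open>is_index k\<close>, of 1 M] by (simp add: mzv_trunc_def)
  also have "\<dots> \<le> harm (Suc M) ^ length k"
    by (intro power_mono harm_mono harm_nonneg) simp
  finally have "power_weight a (Suc M) * mzv_trunc k M \<le> 1 / real (Suc M) ^ 2 * harm (Suc M) ^ length k"
    using power_weight_le[of "Suc M" 2 a] \<open>2 \<le> a\<close>
    by (intro mult_mono) (auto simp: mzv_trunc_def zeta_trunc_power_weight_nonneg)
  then show "mzv_trunc (k @ [a]) (Suc M) \<le>
      mzv_trunc (k @ [a]) M + harm (Suc M) ^ length k / real (Suc M) ^ 2"
    using incr by simp
qed

lemma mzv_trunc_mono_tail_bound:
  assumes "admissible (k @ [a])" "N \<le> M"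
  shows "mzv_trunc (k @ [a]) N \<le> mzv_trunc (k @ [a]) M \<and>
    mzv_trunc (k @ [a]) M \<le> mzv_trunc (k @ [a]) N + harm_tail (length k) N"
proof -
  have "mzv_trunc (k @ [a]) N \<le> mzv_trunc (k @ [a]) M \<and>
      mzv_trunc (k @ [a]) M \<le> mzv_trunc (k @ [a]) N + (\<Sum>\<nu>\<in>{Suc N..M}. harm \<nu> ^ length k / real \<nu> ^ 2)"
    using assms(2)
  proof (induction M rule: dec_induct)
    case (step M)
    then show ?case
      using mzv_trunc_Suc_bounds[OF assms(1), of M] by (simp add: sum.cl_ivl_Suc)
  qed simp
  then show ?thesis using sum_le_harm_tail[where d = "length k" and N = N and M = M] by linarith
qed

definition mzv_domain :: "nat \<Rightarrow> nat list set" where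
  "mzv_domain r = {n. length n = r \<and> sorted_wrt (<) n \<and> (\<forall>x\<in>set n. 0 < x)}"

lemma finite_subset_mzv_domain_strict_chains:
  assumes "finite F" "F \<subseteq> mzv_domain r"
  obtains M where "N \<le> M" "F \<subseteq> strict_chains 1 M r"
proof
  let ?M = "N + (\<Sum>n\<in>F. sum_list n)"
  show "F \<subseteq> strict_chains 1 ?M r"
  proof
    fix n assume n: "n \<in> F"
    have "x \<le> ?M" if "x \<in> set n" for x
      using member_le_sum_list[OF that] member_le_sum[OF n, of sum_list] assms(1) by simp
    then show "n \<in> strict_chains 1 ?M r"
      using n assms(2) by (auto simp: strict_chains_def mzv_domain_def Suc_le_eq)
  qed
qed simp

lemma mzv_bounds:
  assumes "admissible (k @ [a])"
  shows "mzv_trunc (k @ [a]) N \<le> mzv (k @ [a])"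
    and "mzv (k @ [a]) \<le> mzv_trunc (k @ [a]) N + harm_tail (length k) N"
proof -
  let ?k = "k @ [a]" and ?g = "chain_term power_weight (k @ [a])"
  let ?D = "mzv_domain (length ?k)"
  have g_nonneg: "0 \<le> ?g n" for n
    by (simp add: chain_term_def power_weight_def prod_nonneg)
  have trunc: "mzv_trunc ?k M = sum ?g (strict_chains 1 M (length ?k))" for M
    by (simp add: mzv_trunc_def zeta_trunc_eq_sum_chains)
  have finite_bound: "sum ?g F \<le> mzv_trunc ?k N + harm_tail (length k) N"
    if F: "finite F" "F \<subseteq> ?D" for F N
  proof -
    obtain M where M: "N \<le> M" "F \<subseteq> strict_chains 1 M (length ?k)"
      using finite_subset_mzv_domain_strict_chains[OF F] .
    then have "sum ?g F \<le> mzv_trunc ?k M"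
      unfolding trunc by (intro sum_mono2 finite_strict_chains g_nonneg)
    then show ?thesis using mzv_trunc_mono_tail_bound[OF assms M(1)] by linarith
  qed
  have bdd: "bdd_above (sum ?g ` {F. finite F \<and> F \<subseteq> ?D})"
    using finite_bound[of _ 0] by (auto intro!: bdd_aboveI)
  have "?g summable_on ?D"
    using bdd by (intro nonneg_bdd_above_summable_on g_nonneg) (auto simp: conj_commute)
  then have mzv_eq: "mzv ?k = (SUP F\<in>{F. finite F \<and> F \<subseteq> ?D}. sum ?g F)"
    unfolding mzv_def mzv_domain_def chain_term_def power_weight_def
    by (rule infsum_nonneg_is_SUPREMUM_real) (simp add: prod_nonneg)
  have "strict_chains 1 N (length ?k) \<subseteq> ?D"
    by (auto simp: strict_chains_def mzv_domain_def)
  then show "mzv_trunc ?k N \<le> mzv ?k"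
    unfolding mzv_eq trunc by (intro cSUP_upper[OF _ bdd]) (auto simp: finite_strict_chains)
  show "mzv ?k \<le> mzv_trunc ?k N + harm_tail (length k) N"
    unfolding mzv_eq by (rule cSUP_least) (auto intro!: finite_bound simp del: length_append_singleton)
qed

lemma harm_approx_mzv:
  assumes "admissible k"
  shows "harm_approx [:mzv k:] (mzv_trunc k)"
proof (cases k rule: rev_cases)
  case Nil
  have "{n :: nat list. length n = 0 \<and> sorted_wrt (<) n \<and> (\<forall>x\<in>set n. 0 < x)} = {[]}"
    by auto
  then have "mzv [] = 1" by (simp add: mzv_def)
  moreover have "mzv_trunc [] = (\<lambda>N. 1)" by (simp add: mzv_trunc_def fun_eq_iff)
  ultimately show ?thesis using harm_approx_const[of "[:1:]" 1] by (simp add: Nil)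
next
  case (snoc k' a)
  have "(\<lambda>N. (mzv k - mzv_trunc k N) * harm N ^ j) \<longlonglongrightarrow> 0" for j
  proof (rule tendsto_sandwich[OF _ _ tendsto_const harm_tail_tendsto_zero[of "length k' + j"]])
    show "\<forall>\<^sub>F N in sequentially. 0 \<le> (mzv k - mzv_trunc k N) * harm N ^ j"
      using mzv_bounds(1)[of k' a] assms by (auto simp: snoc harm_nonneg)
    have "(mzv k - mzv_trunc k N) * harm N ^ j \<le> harm_tail (length k') N * harm N ^ j" for N
      using mzv_bounds(2)[of k' a N] assms by (intro mult_right_mono) (auto simp: snoc harm_nonneg)
    then show "\<forall>\<^sub>F N in sequentially. (mzv k - mzv_trunc k N) * harm N ^ j \<le> harm_tail (length k' + j) N"
      using harm_tail_mult_harm_power_le order_trans by (blast intro: always_eventually)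
  qed
  then show ?thesis by (simp add: harm_approx_def harm_negligible_def)
qed

section \<open>The harmonic regularisation\<close>

lemma is_index_Cons: "is_index (a # k) \<longleftrightarrow> 0 < a \<and> is_index k"
  by (simp add: is_index_def)

lemma stuffle_is_index:
  "is_index k \<Longrightarrow> is_index l \<Longrightarrow> w \<in> set (stuffle k l) \<Longrightarrow> is_index w"
proof (induction k l arbitrary: w rule: stuffle.induct)
  case (3 a k b l)
  have "0 < a" "is_index k" "0 < b" "is_index l"
    using "3.prems"(1,2) by (simp_all add: is_index_Cons)
  from "3.prems"(3) consider
      x where "x \<in> set (stuffle k (b # l))" "w = a # x"
    | x where "x \<in> set (stuffle (a # k) l)" "w = b # x"
    | x where "x \<in> set (stuffle k l)" "w = (a + b) # x"
    by auto
  then show ?case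
    by cases (use "3.IH" "3.prems"(1,2) \<open>0 < a\<close> \<open>is_index k\<close> \<open>0 < b\<close> \<open>is_index l\<close>
      in \<open>simp_all add: is_index_Cons\<close>)
qed simp_all

lemma stuffle_Nil_right [simp]: "stuffle k [] = [k]"
  by (cases k) auto

lemma snoc_mem_stuffle_singleton: "k @ [b] \<in> set (stuffle k [b])"
  by (induction k) auto

lemma length_mem_stuffle_singleton:
  "w \<in> set (stuffle k [b]) \<Longrightarrow> length w = length k \<or> length w = Suc (length k)"
proof (induction k arbitrary: w)
  case (Cons a k)
  then show ?case by (auto dest!: Cons.IH)
qed simp

definition trailing_ones :: "nat list \<Rightarrow> nat" where
  "trailing_ones w = length (takeWhile (\<lambda>x. x = 1) (rev w))"

lemma trailing_ones_Cons:
  "trailing_ones (a # w) =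
    (if \<forall>x\<in>set w. x = 1 then (if a = 1 then Suc (length w) else length w) else trailing_ones w)"
  by (auto simp: trailing_ones_def takeWhile_append)

lemma trailing_ones_le_length: "trailing_ones w \<le> length w"
  unfolding trailing_ones_def by (metis length_rev length_takeWhile_le)

lemma trailing_ones_eq_length_iff: "trailing_ones w = length w \<longleftrightarrow> (\<forall>x\<in>set w. x = 1)"
proof -
  have "length (takeWhile (\<lambda>x. x = 1) (rev w)) = length (rev w) \<longleftrightarrow> takeWhile (\<lambda>x. x = 1) (rev w) = rev w"
    by (metis length_append length_0_conv add_cancel_left_right takeWhile_dropWhile_id append_Nil2)
  then show ?thesis by (simp add: trailing_ones_def takeWhile_eq_all_conv)
qed

lemma trailing_ones_Cons_ge: "trailing_ones w \<le> trailing_ones (a # w)"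
  using trailing_ones_le_length[of w] by (auto simp: trailing_ones_Cons)

lemma trailing_ones_stuffle_one:
  assumes "is_index k" "w \<in> set (stuffle k [1])" "w \<noteq> k @ [1]"
  shows "trailing_ones w \<le> trailing_ones k"
  using assms
proof (induction k arbitrary: w)
  case (Cons a k)
  have "1 \<le> a" "is_index k" using Cons.prems(1) by (auto simp: is_index_def)
  from Cons.prems(2) consider (keep) w' where "w = a # w'" "w' \<in> set (stuffle k [1])"
    | (insert) "w = 1 # a # k" | (merge) "w = (a + 1) # k"
    by (cases k) auto
  then show ?case
  proof cases
    case keep
    with Cons.prems(3) have "w' \<noteq> k @ [1]" by auto
    with Cons.IH[OF \<open>is_index k\<close> keep(2)] have IH: "trailing_ones w' \<le> trailing_ones k" .
    show ?thesis
    proof (cases "\<forall>x\<in>set w'. x = 1")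
      case True
      then have "trailing_ones w' = length w'" by (simp add: trailing_ones_eq_length_iff)
      with IH trailing_ones_le_length[of k] length_mem_stuffle_singleton[OF keep(2)]
      have "length w' = length k" "trailing_ones k = length k" by auto
      then show ?thesis using keep True by (auto simp: trailing_ones_Cons trailing_ones_eq_length_iff)
    next
      case False
      then show ?thesis using keep IH trailing_ones_Cons_ge[of k a] by (auto simp: trailing_ones_Cons)
    qed
  next
    case insert
    have "\<not> (\<forall>x\<in>set (a # k). x = 1)"
    proof
      assume "\<forall>x\<in>set (a # k). x = 1"
      then have "1 # a # k = (a # k) @ [1]"
        by (metis replicate_append_same replicate_length_same)
      with insert Cons.prems(3) show False by simp
    qed
    then show ?thesis using insert by (simp add: trailing_ones_Cons)
  next
    case merge
    then show ?thesis using \<open>1 \<le> a\<close> trailing_ones_le_length[of k] trailing_ones_Cons_ge[of k a]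
      by (auto simp: trailing_ones_Cons)
  qed
qed simp

lemma trailing_ones_zero_imp_admissible: "is_index k \<Longrightarrow> trailing_ones k = 0 \<Longrightarrow> admissible k"
  by (cases k rule: rev_cases) (auto simp: admissible_def is_index_def trailing_ones_def split: if_splits)

lemma trailing_ones_Suc_imp:
  assumes "trailing_ones k = Suc m"
  obtains k0 where "k = k0 @ [1]" "trailing_ones k0 = m"
  using assms by (cases k rule: rev_cases) (auto simp: trailing_ones_def split: if_splits)

lemma index_induct_trailing_ones [consumes 1, case_names admissible snoc_one]:
  assumes "is_index k"
    and admissible: "\<And>k. admissible k \<Longrightarrow> P k"
    and snoc_one: "\<And>k. is_index k \<Longrightarrow> P k \<Longrightarrow>
      (\<And>w. w \<in> set (stuffle k [1]) \<Longrightarrow> w \<noteq> k @ [1] \<Longrightarrow> P w) \<Longrightarrow> P (k @ [1])"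
  shows "P k"
proof -
  have "\<forall>k. is_index k \<longrightarrow> trailing_ones k = m \<longrightarrow> P k" for m
  proof (induction m rule: less_induct)
    case (less m)
    show ?case
    proof (intro allI impI)
      fix k assume k: "is_index k" "trailing_ones k = m"
      show "P k"
      proof (cases m)
        case 0
        then show ?thesis using k trailing_ones_zero_imp_admissible admissible by simp
      next
        case (Suc m')
        then obtain k0 where k0: "k = k0 @ [1]" "trailing_ones k0 = m'"
          using k(2) trailing_ones_Suc_imp by blast
        have "is_index k0" using k(1) k0(1) by (simp add: is_index_def)
        have "is_index [1::nat]" by (simp add: is_index_def)
        have "P w" if "w \<in> set (stuffle k0 [1])" "w \<noteq> k0 @ [1]" for w
          using less.IH[of "trailing_ones w"] trailing_ones_stuffle_one[OF \<open>is_index k0\<close> that]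
            stuffle_is_index[OF \<open>is_index k0\<close> \<open>is_index [1]\<close> that(1)] k0(2) Suc by auto
        moreover have "P k0" using less.IH[of m'] \<open>is_index k0\<close> k0(2) Suc by blast
        ultimately show ?thesis using snoc_one[OF \<open>is_index k0\<close>] k0(1) by blast
      qed
    qed
  qed
  then show ?thesis using assms(1) by blast
qed

lemma mzv_trunc_stuffle: "mzv_trunc k N * mzv_trunc l N = sum_list (map (\<lambda>w. mzv_trunc w N) (stuffle k l))"
  unfolding mzv_trunc_def using zeta_trunc_stuffle[of power_weight, OF power_weight_add] by (simp add: o_def)

lemma mzv_trunc_one: "mzv_trunc [1] = harm"
  by (simp add: fun_eq_iff mzv_trunc_def power_weight_def harm_def inverse_eq_divide)

lemma sum_list_map_count_list:
  "sum_list (map f xs) = of_nat (count_list xs x) * f x + sum_list (map f (filter (\<lambda>y. y \<noteq> x) xs))"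
  by (induction xs) (auto simp: algebra_simps)

lemma count_list_stuffle_snoc_pos: "0 < count_list (stuffle k [b]) (k @ [b])"
  using snoc_mem_stuffle_singleton[of k b] count_list_0_iff[of "stuffle k [b]" "k @ [b]"] by simp

lemma harm_approx_mzv_trunc_exists: "is_index k \<Longrightarrow> \<exists>p. harm_approx p (mzv_trunc k)"
proof (induction k rule: index_induct_trailing_ones)
  case (admissible k)
  then show ?case using harm_approx_mzv by blast
next
  case (snoc_one k)
  obtain p0 where p0: "harm_approx p0 (mzv_trunc k)" using snoc_one.IH(1) by blast
  define c where "c = count_list (stuffle k [1]) (k @ [1])"
  define R where "R = filter (\<lambda>w. w \<noteq> k @ [1]) (stuffle k [1])"
  have "0 < c" using count_list_stuffle_snoc_pos by (simp add: c_def)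
  have "\<forall>w\<in>set R. \<exists>p. harm_approx p (mzv_trunc w)"
    using snoc_one.IH(2) by (simp add: R_def)
  then obtain P where P: "\<forall>w\<in>set R. harm_approx (P w) (mzv_trunc w)"
    by (rule bchoice[elim_format]) blast
  have "mzv_trunc (k @ [1]) =
      (\<lambda>N. 1 / real c * (mzv_trunc k N * harm N - sum_list (map (\<lambda>w. mzv_trunc w N) R)))"
  proof
    fix N
    show "mzv_trunc (k @ [1]) N =
        1 / real c * (mzv_trunc k N * harm N - sum_list (map (\<lambda>w. mzv_trunc w N) R))"
      using mzv_trunc_stuffle[of k N "[1]"] \<open>0 < c\<close>
        sum_list_map_count_list[of "\<lambda>w. mzv_trunc w N" "stuffle k [1]" "k @ [1]"]
      unfolding mzv_trunc_one by (simp add: c_def R_def field_simps)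
  qed
  moreover have "harm_approx (smult (1 / real c) (p0 * [:0, 1:] - sum_list (map P R)))
      (\<lambda>N. 1 / real c * (mzv_trunc k N * harm N - sum_list (map (\<lambda>w. mzv_trunc w N) R)))"
    by (intro harm_approx_smult harm_approx_diff harm_approx_mult p0 harm_approx_harm
        harm_approx_sum_list P[rule_format])
  ultimately show ?case by auto
qed

definition reg_poly :: "nat list \<Rightarrow> real poly" where
  "reg_poly k = (if is_index k then (THE p. harm_approx p (mzv_trunc k)) else 0)"

lemma harm_approx_reg_poly: "is_index k \<Longrightarrow> harm_approx (reg_poly k) (mzv_trunc k)"
  unfolding reg_poly_def
  using theI'[of "\<lambda>p. harm_approx p (mzv_trunc k)"] harm_approx_mzv_trunc_exists harm_approx_unique
  by auto

definition is_harmonic_reg :: "(nat list \<Rightarrow> real poly) \<Rightarrow> bool" where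
  "is_harmonic_reg f \<longleftrightarrow>
     (\<forall>k l. is_index k \<longrightarrow> is_index l \<longrightarrow> f k * f l = sum_list (map f (stuffle k l))) \<and>
     (\<forall>k. admissible k \<longrightarrow> f k = [:mzv k:]) \<and>
     f [1] = [:0, 1:] \<and>
     (\<forall>k. \<not> is_index k \<longrightarrow> f k = 0)"

lemma is_harmonic_reg_reg_poly: "is_harmonic_reg reg_poly"
  unfolding is_harmonic_reg_def
proof (intro conjI allI impI)
  fix k l :: "nat list" assume k: "is_index k" and l: "is_index l"
  have "harm_approx (reg_poly k * reg_poly l) (\<lambda>N. mzv_trunc k N * mzv_trunc l N)"
    using k l by (intro harm_approx_mult harm_approx_reg_poly)
  moreover have "harm_approx (sum_list (map reg_poly (stuffle k l)))
      (\<lambda>N. sum_list (map (\<lambda>w. mzv_trunc w N) (stuffle k l)))"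
    by (intro harm_approx_sum_list harm_approx_reg_poly stuffle_is_index[OF k l])
  ultimately show "reg_poly k * reg_poly l = sum_list (map reg_poly (stuffle k l))"
    by (simp add: mzv_trunc_stuffle harm_approx_unique)
next
  fix k :: "nat list" assume "admissible k"
  then show "reg_poly k = [:mzv k:]"
    using harm_approx_mzv harm_approx_reg_poly harm_approx_unique unfolding admissible_def by blast
next
  have "harm_approx (reg_poly [1]) harm"
    using harm_approx_reg_poly[of "[1]"] unfolding mzv_trunc_one by (simp add: is_index_def)
  then show "reg_poly [1] = [:0, 1:]" using harm_approx_harm harm_approx_unique by blast
qed (simp add: reg_poly_def)

lemma is_harmonic_reg_unique:
  assumes f: "is_harmonic_reg f" and g: "is_harmonic_reg g"
  shows "f = g"
proof
  fix k
  show "f k = g k"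
  proof (cases "is_index k")
    case True
    then show ?thesis
    proof (induction k rule: index_induct_trailing_ones)
      case (admissible k)
      then show ?case using f g by (simp add: is_harmonic_reg_def)
    next
      case (snoc_one k)
      define c where "c = count_list (stuffle k [1]) (k @ [1])"
      define R where "R = filter (\<lambda>w. w \<noteq> k @ [1]) (stuffle k [1])"
      have "0 < c" using count_list_stuffle_snoc_pos by (simp add: c_def)
      have "is_index [1::nat]" by (simp add: is_index_def)
      have rel: "of_nat c * h (k @ [1]) = h k * h [1] - sum_list (map h R)" if "is_harmonic_reg h" for h
      proof -
        have "h k * h [1] = sum_list (map h (stuffle k [1]))"
          using that snoc_one.hyps \<open>is_index [1]\<close> unfolding is_harmonic_reg_def by blast
        then show ?thesis
          using sum_list_map_count_list[of h "stuffle k [1]" "k @ [1]"] by (simp add: c_def R_def)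
      qed
      have "f [1] = g [1]" using f g by (simp add: is_harmonic_reg_def)
      moreover have "map f R = map g R" using snoc_one.IH(2) by (auto simp: R_def)
      ultimately have "of_nat c * f (k @ [1]) = of_nat c * g (k @ [1])"
        by (simp only: rel[OF f] rel[OF g] snoc_one.IH(1))
      with \<open>0 < c\<close> show ?case by simp
    qed
  next
    case False
    then show ?thesis using f g by (simp add: is_harmonic_reg_def)
  qed
qed

lemma zeta_star_reg_eq_reg_poly: "zeta_star_reg = reg_poly"
  unfolding zeta_star_reg_def is_harmonic_reg_def[symmetric]
  using is_harmonic_reg_reg_poly is_harmonic_reg_unique by blast

lemma harm_approx_zeta_star_reg: "is_index k \<Longrightarrow> harm_approx (zeta_star_reg k) (mzv_trunc k)"
  by (simp add: zeta_star_reg_eq_reg_poly harm_approx_reg_poly)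

section \<open>Shifted weights\<close>

text \<open>The weight \<open>(\<nu> + t)\<^sup>-\<^sup>a\<close>, expanded in powers of \<open>t\<close>.\<close>
definition shift_weight :: "nat \<Rightarrow> nat \<Rightarrow> real fps" where
  "shift_weight a \<nu> = Abs_fps (\<lambda>p. ((- of_nat a) gchoose p) / real \<nu> ^ (a + p))"

lemma shift_weight_add: "shift_weight (a + b) \<nu> = shift_weight a \<nu> * shift_weight b \<nu>"
proof (rule fps_ext)
  fix m
  have "fps_nth (shift_weight a \<nu> * shift_weight b \<nu>) m =
      (\<Sum>i=0..m. ((- of_nat a :: real) gchoose i) * ((- of_nat b) gchoose (m - i))) / real \<nu> ^ (a + b + m)"
    unfolding fps_mult_nth sum_divide_distrib
  proof (intro sum.cong refl)
    fix i assume "i \<in> {0..m}"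
    then have "a + i + (b + (m - i)) = a + b + m" by simp
    then have "real \<nu> ^ (a + i) * real \<nu> ^ (b + (m - i)) = real \<nu> ^ (a + b + m)"
      by (metis power_add)
    then show "fps_nth (shift_weight a \<nu>) i * fps_nth (shift_weight b \<nu>) (m - i) =
        ((- of_nat a) gchoose i) * ((- of_nat b) gchoose (m - i)) / real \<nu> ^ (a + b + m)"
      by (simp add: shift_weight_def)
  qed
  also have "\<dots> = fps_nth (shift_weight (a + b) \<nu>) m"
    by (simp add: shift_weight_def gbinomial_Vandermonde add_ac)
  finally show "fps_nth (shift_weight (a + b) \<nu>) m = fps_nth (shift_weight a \<nu> * shift_weight b \<nu>) m" ..
qed

lemma gbinomial_minus_of_nat: "((- of_nat a :: real) gchoose p) = (-1) ^ p * real ((a + p - 1) choose p)"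
proof (cases "a + p = 0")
  case False
  have "((- of_nat a :: real) gchoose p) = (-1) ^ p * ((of_nat a + of_nat p - 1) gchoose p)"
    by (rule gbinomial_minus)
  also have "of_nat a + of_nat p - 1 = (of_nat (a + p - 1) :: real)"
    using False by (subst of_nat_diff) auto
  finally show ?thesis by (simp only: binomial_gbinomial)
qed simp

lemma fps_nth_shift_weight:
  "fps_nth (shift_weight a \<nu>) p = (-1) ^ p * real ((a + p - 1) choose p) * power_weight (a + p) \<nu>"
  by (simp add: shift_weight_def power_weight_def gbinomial_minus_of_nat)

definition weak_compositions :: "nat \<Rightarrow> nat \<Rightarrow> nat list set" where
  "weak_compositions r m = {n. length n = r \<and> sum_list n = m}"

lemma finite_weak_compositions: "finite (weak_compositions r m)"
proof -
  have "weak_compositions r m \<subseteq> {n. set n \<subseteq> {0..m} \<and> length n = r}"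
    by (auto simp: weak_compositions_def member_le_sum_list)
  then show ?thesis using finite_lists_length_eq[of "{0..m}" r] finite_subset by blast
qed

lemma sum_weak_compositions_Suc:
  "(\<Sum>n\<in>weak_compositions (Suc r) m. f n) = (\<Sum>p=0..m. \<Sum>n\<in>weak_compositions r (m - p). f (p # n))"
proof -
  have "weak_compositions (Suc r) m = (\<Union>p\<in>{0..m}. (#) p ` weak_compositions r (m - p))"
  proof (intro equalityI subsetI)
    fix n assume "n \<in> weak_compositions (Suc r) m"
    then obtain p n' where "n = p # n'" "length n' = r" "p + sum_list n' = m"
      by (auto simp: weak_compositions_def length_Suc_conv)
    then show "n \<in> (\<Union>p\<in>{0..m}. (#) p ` weak_compositions r (m - p))"
      by (intro UN_I[of p]) (auto simp: weak_compositions_def)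
  qed (auto simp: weak_compositions_def)
  then have "(\<Sum>n\<in>weak_compositions (Suc r) m. f n) =
      (\<Sum>p=0..m. \<Sum>n\<in>(#) p ` weak_compositions r (m - p). f n)"
    by (auto intro!: sum.UNION_disjoint simp: finite_weak_compositions)
  then show ?thesis by (simp add: sum.reindex)
qed

lemma bcoef_Cons: "bcoef (a # w) (p # n) = ((a + p - 1) choose p) * bcoef w n"
  by (simp add: bcoef_def prod.lessThan_Suc_shift del: prod.lessThan_Suc)

lemma vadd_Cons: "vadd (a # w) (p # n) = (a + p) # vadd w n"
  by (simp add: vadd_def)

lemma fps_nth_zeta_trunc_shift_weight:
  "fps_nth (zeta_trunc shift_weight N lo w) m =
    (\<Sum>n\<in>weak_compositions (length w) m. (-1) ^ m * real (bcoef w n) * zeta_trunc power_weight N lo (vadd w n))"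
proof (induction w arbitrary: lo m)
  case Nil
  have "weak_compositions 0 m = (if m = 0 then {[]} else {})"
    by (auto simp: weak_compositions_def)
  then show ?case by (simp add: bcoef_def vadd_def)
next
  case (Cons a w)
  let ?Z = "\<lambda>lo n. zeta_trunc power_weight N lo (vadd w n)"
  have "fps_nth (zeta_trunc shift_weight N lo (a # w)) m =
      (\<Sum>\<nu>\<in>{lo..N}. \<Sum>p=0..m. \<Sum>n\<in>weak_compositions (length w) (m - p).
        (-1) ^ m * real (bcoef (a # w) (p # n)) * (power_weight (a + p) \<nu> * ?Z (Suc \<nu>) n))"
    unfolding zeta_trunc.simps fps_sum_nth fps_mult_nth Cons.IH sum_distrib_left
    by (intro sum.cong refl)
      (simp add: fps_nth_shift_weight bcoef_Cons power_add[symmetric] mult_ac)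
  also have "\<dots> = (\<Sum>p=0..m. \<Sum>n\<in>weak_compositions (length w) (m - p).
      (-1) ^ m * real (bcoef (a # w) (p # n)) * zeta_trunc power_weight N lo (vadd (a # w) (p # n)))"
    by (subst sum.swap, rule sum.cong[OF refl], subst sum.swap)
      (simp add: vadd_Cons sum_distrib_left)
  finally show ?case by (simp only: length_Cons sum_weak_compositions_Suc)
qed

section \<open>Passing to the regularised series\<close>

definition fps_harm_approx :: "real poly fps \<Rightarrow> (nat \<Rightarrow> real fps) \<Rightarrow> bool" where
  "fps_harm_approx F G \<longleftrightarrow> (\<forall>m. harm_approx (fps_nth F m) (\<lambda>N. fps_nth (G N) m))"

lemma fps_harm_approx_unique: "fps_harm_approx F G \<Longrightarrow> fps_harm_approx F' G \<Longrightarrow> F = F'"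
  unfolding fps_harm_approx_def by (intro fps_ext) (blast intro: harm_approx_unique)

lemma fps_harm_approx_of_int: "fps_harm_approx (of_int c) (\<lambda>N. of_int c)"
  unfolding fps_harm_approx_def harm_approx_def by (simp add: harm_negligible_zero)

lemma fps_harm_approx_add:
  "fps_harm_approx F G \<Longrightarrow> fps_harm_approx F' G' \<Longrightarrow> fps_harm_approx (F + F') (\<lambda>N. G N + G' N)"
  unfolding fps_harm_approx_def by (auto intro: harm_approx_add)

lemma fps_harm_approx_mult:
  "fps_harm_approx F G \<Longrightarrow> fps_harm_approx F' G' \<Longrightarrow> fps_harm_approx (F * F') (\<lambda>N. G N * G' N)"
  unfolding fps_harm_approx_def fps_mult_nth by (auto intro!: harm_approx_sum harm_approx_mult)

lemma fps_harm_approx_power: "fps_harm_approx F G \<Longrightarrow> fps_harm_approx (F ^ i) (\<lambda>N. G N ^ i)"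
  by (induction i) (use fps_harm_approx_of_int[of 1] in \<open>auto intro: fps_harm_approx_mult\<close>)

lemma fps_harm_approx_sum:
  "finite A \<Longrightarrow> (\<And>a. a \<in> A \<Longrightarrow> fps_harm_approx (F a) (G a)) \<Longrightarrow>
    fps_harm_approx (\<Sum>a\<in>A. F a) (\<lambda>N. \<Sum>a\<in>A. G a N)"
  unfolding fps_harm_approx_def fps_sum_nth by (auto intro!: harm_approx_sum)

lemma fps_harm_approx_sum_list:
  "(\<And>a. a \<in> set xs \<Longrightarrow> fps_harm_approx (F a) (G a)) \<Longrightarrow>
    fps_harm_approx (sum_list (map F xs)) (\<lambda>N. sum_list (map (\<lambda>a. G a N) xs))"
  by (induction xs) (use fps_harm_approx_of_int[of 0] in \<open>auto intro: fps_harm_approx_add\<close>)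

lemma vadd_is_index: "is_index w \<Longrightarrow> is_index (vadd w n)"
  by (auto simp: is_index_def vadd_def dest: set_zip_leftD)

lemma fps_harm_approx_zeta_shift:
  assumes "is_index w"
  shows "fps_harm_approx (zeta_shift w) (\<lambda>N. zeta_trunc shift_weight N 1 w)"
  unfolding fps_harm_approx_def
proof
  fix m
  have "fps_nth (zeta_shift w) m = (\<Sum>n\<in>weak_compositions (length w) m.
      of_nat (bcoef w n) * zeta_star_reg (vadd w n) * (-1) ^ m)"
    by (simp add: zeta_shift_def weak_compositions_def)
  moreover have "harm_approx (\<Sum>n\<in>weak_compositions (length w) m.
        of_nat (bcoef w n) * zeta_star_reg (vadd w n) * (-1) ^ m)
      (\<lambda>N. \<Sum>n\<in>weak_compositions (length w) m. real (bcoef w n) * mzv_trunc (vadd w n) N * (-1) ^ m)"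
    by (intro harm_approx_sum finite_weak_compositions harm_approx_mult harm_approx_const
        harm_approx_zeta_star_reg vadd_is_index assms) simp_all
  ultimately show "harm_approx (fps_nth (zeta_shift w) m) (\<lambda>N. fps_nth (zeta_trunc shift_weight N 1 w) m)"
    by (simp add: fps_nth_zeta_trunc_shift_weight mzv_trunc_def mult_ac)
qed

lemma coarsenings_is_index: "is_index k \<Longrightarrow> l \<in> set (coarsenings k) \<Longrightarrow> is_index l"
proof (induction k arbitrary: l rule: coarsenings.induct)
  case (3 a b k)
  from "3.prems"(2) obtain l' where l': "l' \<in> set (coarsenings (b # k))"
    and l: "l = a # l' \<or> l = (a + hd l') # tl l'" by auto
  have "is_index l'" using "3.IH" "3.prems"(1) l' by (simp add: is_index_Cons)
  with l coarsenings_Cons_nonempty[OF l'] "3.prems"(1) show ?case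
    by (cases l') (auto simp: is_index_def)
qed simp_all

lemma fps_harm_approx_zeta_star_shift:
  assumes "is_index w"
  shows "fps_harm_approx (zeta_star_shift w) (\<lambda>N. zeta_star_trunc shift_weight N 1 w)"
proof -
  have "fps_harm_approx (zeta_star_shift w) (\<lambda>N. sum_list (map (\<lambda>l. zeta_trunc shift_weight N 1 l) (coarsenings w)))"
    unfolding zeta_star_shift_def
    by (intro fps_harm_approx_sum_list fps_harm_approx_zeta_shift coarsenings_is_index[OF assms])
  then show ?thesis
    using sum_coarsenings_zeta_trunc[of shift_weight, OF shift_weight_add] by (simp add: o_def)
qed

theorem corollary2p6:
  fixes k :: "nat list"
  assumes "is_index k"
  shows "(\<Sum>i = 0..length k. (-1) ^ i * zeta_shift (rev (take i k)) * zeta_star_shift (drop i k))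
           = (if length k = 0 then 1 else 0)"
proof -
  let ?trunc = "\<lambda>N. \<Sum>i = 0..length k. (-1) ^ i *
    zeta_trunc shift_weight N 1 (rev (take i k)) * zeta_star_trunc shift_weight N 1 (drop i k)"
  have index: "is_index (rev (take i k))" "is_index (drop i k)" for i
    using assms by (auto simp: is_index_def dest: in_set_takeD in_set_dropD)
  have sign: "fps_harm_approx ((-1) ^ i) (\<lambda>N. (-1) ^ i)" for i
    using fps_harm_approx_power[OF fps_harm_approx_of_int[of "-1"]] by simp
  have "fps_harm_approx
      (\<Sum>i = 0..length k. (-1) ^ i * zeta_shift (rev (take i k)) * zeta_star_shift (drop i k)) ?trunc"
    by (intro fps_harm_approx_sum fps_harm_approx_mult sign fps_harm_approx_zeta_shift
        fps_harm_approx_zeta_star_shift index finite_atLeastAtMost)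
  moreover have "?trunc N = (if length k = 0 then 1 else 0)" for N
    using antipode_zeta_trunc[of k shift_weight N 1] by (cases "k = []") (simp_all add: mult.assoc)
  moreover have "fps_harm_approx (if length k = 0 then 1 else 0) (\<lambda>N. if length k = 0 then 1 else 0)"
    using fps_harm_approx_of_int[of 1] fps_harm_approx_of_int[of 0] by simp
  ultimately show ?thesis by (simp add: fps_harm_approx_unique)
qed

end
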